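(* Let $k\ge1$ and assume $k=1=\beta$ or $1<\beta<k\wedge2$, and let $\hat v$ be as in the context. Let $(t^1,x^1),\dots,(t^m,x^m)$ be distinct points in $(0,\infty)\times\mathbb{R}^k$. Then the random variables $\hat v_1(t^1,x^1),\dots,\hat v_1(t^m,x^m)$ are linearly independent.
   Context: Let $d\ge1$ and $W=W_1+iW_2$ with $W_1,W_2$ independent $\mathbb{R}^d$-valued space-time Gaussian white noises on $\mathbb{R}^{1+k}$. Let $F(t,x,\tau,\xi)=\frac{e^{-i\xi\cdot x-i\tau t}}{2|\xi|}\Big[\frac{1-e^{it(\tau+|\xi|)}}{\tau+|\xi|}-\frac{1-e^{it(\tau-|\xi|)}}{\tau-|\xi|}\Big]$, $v(t,x)=\int_{\mathbb{R}}\int_{\mathbb{R}^k}F(t,x,\tau,\xi)|\xi|^{-(k-\beta)/2}W(d\tau,d\xi)$ and $\hat v=\mathrm{Re}\,v$ on $\mathbb{R}_+\times\mathbb{R}^k$; $\hat v_1$ is its first component. (This has the law of the mild solution of the system of stochastic wave equations driven by noise white in time with spatial covariance $|x-y|^{-\beta}$, or space-time white noise when $k=1=\beta$, with zero initial conditions.) *)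

theory Defs
  imports "HOL-Analysis.Analysis" "HOL-Probability.Probability"
begin

definition sqint :: "'a measure \<Rightarrow> ('a \<Rightarrow> real) \<Rightarrow> bool" where
  "sqint N f \<longleftrightarrow> f \<in> borel_measurable N \<and> integrable N (\<lambda>x. (f x)^2)"

text \<open>Isonormal Gaussian process (Wiener integral) on L2(N), defined on the
  probability space M: linear (a.s.) and W f is centered Gaussian with variance
  the squared L2 norm of f (stated via the characteristic function, which covers
  the degenerate case).\<close>
definition isonormal :: "'w measure \<Rightarrow> 'a measure \<Rightarrow> (('a \<Rightarrow> real) \<Rightarrow> 'w \<Rightarrow> real) \<Rightarrow> bool" where
  "isonormal M N W \<longleftrightarrow> prob_space M \<and>
     (\<forall>f. sqint N f \<longrightarrow> W f \<in> borel_measurable M \<and>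
        (\<forall>u. char (distr M borel (W f)) u =
              complex_of_real (exp (- (u^2 * (\<integral>x. (f x)^2 \<partial>N)) / 2)))) \<and>
     (\<forall>f g a b. sqint N f \<longrightarrow> sqint N g \<longrightarrow>
        (AE \<omega> in M. W (\<lambda>x. a * f x + b * g x) \<omega> = a * W f \<omega> + b * W g \<omega>))"

definition Fker :: "real \<Rightarrow> real^'k \<Rightarrow> real \<Rightarrow> real^'k \<Rightarrow> complex" where
  "Fker t x \<tau> \<xi> =
     cis (- (\<xi> \<bullet> x) - \<tau> * t) / complex_of_real (2 * norm \<xi>) *
     ((1 - cis (t * (\<tau> + norm \<xi>))) / complex_of_real (\<tau> + norm \<xi>)
      - (1 - cis (t * (\<tau> - norm \<xi>))) / complex_of_real (\<tau> - norm \<xi>))"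

definition Gker :: "real \<Rightarrow> real \<Rightarrow> real^'k \<Rightarrow> real \<Rightarrow> real^'k \<Rightarrow> complex" where
  "Gker \<beta> t x \<tau> \<xi> =
     Fker t x \<tau> \<xi> * complex_of_real (norm \<xi> powr (- (real CARD('k) - \<beta>) / 2))"

text \<open>The noise: a single isonormal process on L2 of ((bool x 'd) x (R x R^k)) with
  counting x Lebesgue measure; index (True, j) is the j-th component of W_1 and
  (False, j) the j-th component of W_2 (this encodes that all 2d scalar white noises
  are independent). Then component j0 of Re v(t,x) is
  Re(int G dW_1^{j0} + i int G dW_2^{j0}) = W_1^{j0}(Re G) - W_2^{j0}(Im G).\<close>
definition vhat :: "(((bool \<times> 'd) \<times> (real \<times> (real^'k)) \<Rightarrow> real) \<Rightarrow> 'w \<Rightarrow> real)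
    \<Rightarrow> 'd \<Rightarrow> real \<Rightarrow> real \<Rightarrow> real^'k \<Rightarrow> 'w \<Rightarrow> real" where
  "vhat W j0 \<beta> t x =
     W (\<lambda>((a, j), (\<tau>, \<xi>)). if j = j0 then
          (if a then Re (Gker \<beta> t x \<tau> \<xi>) else - Im (Gker \<beta> t x \<tau> \<xi>)) else 0)"

end

theory Submission
  imports Defs
begin

(*
  Write vhat_1(t,x) = W(f_(t,x)) for the isonormal process W, where f_(t,x) carries the real and
  imaginary parts of G(t,x;tau,xi) = F(t,x;tau,xi) |xi|^(-(k-beta)/2). If sum_j c_j vhat_1(t_j,x_j)
  vanishes a.s., this centred Gaussian has variance zero, so sum_j c_j G(t_j,x_j;.) = 0 a.e. and,
  by continuity, sum_j c_j F(t_j,x_j;tau,xi) = 0 off the light cone tau = +-|xi|.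

  For fixed xi <> 0, multiplying by 2|xi|(tau^2 - |xi|^2) turns this into
  sum_j a_j exp(-i tau t_j) + B tau + C = 0 for tau > |xi|, with a_j = -2|xi| c_j exp(-i xi.x_j).
  Exponentials with distinct frequencies are linearly independent even modulo affine functions, so
  sum_(t_j = T) c_j exp(-i xi.x_j) = 0 for every time T and every xi <> 0. Restricting xi to a ray
  whose direction separates the finitely many x_j with t_j = T, the same independence gives c_j = 0.

  The hypothesis on beta enters only through the square integrability of f_(t,x):
  int |F|^2 dtau <= C min(1, |xi|^-2), and |xi|^(beta-k) min(1, |xi|^-2) is integrable on R^k
  because 0 < beta < 2.
*)

section \<open>Bounds for the kernel\<close>

definition cis_quot :: "real \<Rightarrow> real \<Rightarrow> complex" where
  "cis_quot t a = (1 - cis (t * a)) / complex_of_real a"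

lemma norm_cis_minus_one_le: "cmod (cis x - 1) \<le> \<bar>x\<bar>"
  using iexp_approx1[of x 0] by (simp add: cis_conv_exp)

lemma norm_cis_diff_le: "cmod (cis x - cis y) \<le> \<bar>x - y\<bar>"
proof -
  have "cis y * cis (x - y) = cis x"
    by (simp add: cis_mult)
  then have "cis x - cis y = cis y * (cis (x - y) - 1)"
    by (simp add: algebra_simps)
  then show ?thesis
    using norm_cis_minus_one_le[of "x - y"] by (simp add: norm_mult)
qed

lemma norm_cis_quot_le_time:
  assumes "t \<ge> 0" shows "cmod (cis_quot t a) \<le> t"
proof (cases "a = 0")
  case False
  have "cmod (1 - cis (t * a)) \<le> t * \<bar>a\<bar>"
    using norm_cis_minus_one_le[of "t * a"] assms by (simp add: norm_minus_commute abs_mult)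
  then show ?thesis
    using False by (simp add: cis_quot_def norm_divide divide_le_eq)
qed (use assms in \<open>simp add: cis_quot_def\<close>)

lemma norm_cis_quot_le_inverse: "cmod (cis_quot t a) \<le> 2 / \<bar>a\<bar>"
proof -
  have "cmod (1 - cis (t * a)) \<le> 2"
    using norm_triangle_ineq4[of 1 "cis (t * a)"] by simp
  then show ?thesis
    by (simp add: cis_quot_def norm_divide divide_right_mono)
qed

lemma norm_cis_quot_sq_le:
  assumes "t \<ge> 0" shows "(cmod (cis_quot t a))\<^sup>2 \<le> (2 * t\<^sup>2 + 8) / (1 + a\<^sup>2)"
proof (cases "\<bar>a\<bar> \<le> 1")
  case True
  then have "a\<^sup>2 \<le> 1"
    by (simp add: abs_square_le_1)
  then have bound: "t\<^sup>2 * (1 + a\<^sup>2) \<le> 2 * t\<^sup>2 + 8"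
    using mult_left_mono[of "a\<^sup>2" 1 "t\<^sup>2"] by (simp add: algebra_simps)
  have "(cmod (cis_quot t a))\<^sup>2 \<le> t\<^sup>2"
    using norm_cis_quot_le_time[OF assms] by (simp add: power_mono)
  then have "(cmod (cis_quot t a))\<^sup>2 * (1 + a\<^sup>2) \<le> t\<^sup>2 * (1 + a\<^sup>2)"
    by (intro mult_right_mono) auto
  with bound have "(cmod (cis_quot t a))\<^sup>2 * (1 + a\<^sup>2) \<le> 2 * t\<^sup>2 + 8"
    by linarith
  then show ?thesis
    by (simp add: le_divide_eq add_pos_nonneg)
next
  case False
  then have a: "1 \<le> a\<^sup>2"
    by (simp add: abs_square_le_1[symmetric])
  have "(cmod (cis_quot t a))\<^sup>2 \<le> (2 / \<bar>a\<bar>)\<^sup>2"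
    using norm_cis_quot_le_inverse[of t a] by (simp add: power_mono)
  also have "\<dots> = 4 / a\<^sup>2"
    by (simp add: power_divide)
  also have "\<dots> \<le> (2 * t\<^sup>2 + 8) / (1 + a\<^sup>2)"
  proof -
    have "4 * (1 + a\<^sup>2) \<le> 8 * a\<^sup>2"
      using a by simp
    also have "\<dots> \<le> (2 * t\<^sup>2 + 8) * a\<^sup>2"
      by (simp add: algebra_simps)
    finally have "4 * (1 + a\<^sup>2) \<le> (2 * t\<^sup>2 + 8) * a\<^sup>2" .
    then show ?thesis
      using a by (simp add: divide_le_eq le_divide_eq add_pos_nonneg frac_le_eq)
  qed
  finally show ?thesis .
qed

lemma has_integral_cis:
  assumes "a \<noteq> 0" "t \<ge> 0"
  shows "((\<lambda>s. cis (s * a)) has_integral \<i> * cis_quot t a) {0..t}"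
proof -
  define F where "F z = exp (\<i> * complex_of_real a * z) / (\<i> * complex_of_real a)" for z
  have "(F has_field_derivative exp (\<i> * complex_of_real a * z)) (at z)" for z
    unfolding F_def using assms(1) by (auto intro!: derivative_eq_intros)
  then have "((\<lambda>s. exp (\<i> * complex_of_real a * of_real s)) has_integral F (of_real t) - F (of_real 0)) {0..t}"
    by (intro fundamental_theorem_of_calculus[OF assms(2)] has_vector_derivative_real_field)
  moreover have "exp (\<i> * complex_of_real a * of_real s) = cis (s * a)" for s
    by (simp add: cis_conv_exp mult_ac)
  moreover have "F (of_real t) - F (of_real 0) = \<i> * cis_quot t a"
    using assms(1) by (simp add: F_def cis_quot_def cis_conv_exp field_simps)
  ultimately show ?thesis by simp
qed

lemma norm_cis_quot_diff_le:
  assumes "a \<noteq> 0" "b \<noteq> 0" "t \<ge> 0"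
  shows "cmod (cis_quot t a - cis_quot t b) \<le> t\<^sup>2 * \<bar>a - b\<bar>"
proof -
  have int: "((\<lambda>s. cis (s * a) - cis (s * b)) has_integral \<i> * (cis_quot t a - cis_quot t b)) {0..t}"
    using has_integral_diff[OF has_integral_cis[of a t] has_integral_cis[of b t]] assms
    by (simp add: algebra_simps)
  have "cmod (cis (s * a) - cis (s * b)) \<le> t * \<bar>a - b\<bar>" if "s \<in> {0..t}" for s
  proof -
    have "cmod (cis (s * a) - cis (s * b)) \<le> s * \<bar>a - b\<bar>"
      using norm_cis_diff_le[of "s * a" "s * b"] that by (simp add: abs_mult flip: right_diff_distrib)
    also have "\<dots> \<le> t * \<bar>a - b\<bar>"
      using that by (simp add: mult_right_mono)
    finally show ?thesis .
  qed
  then have "cmod (\<i> * (cis_quot t a - cis_quot t b)) \<le> t * \<bar>a - b\<bar> * t"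
    using has_integral_bound[OF _ int[folded cbox_interval]] assms by simp
  then show ?thesis
    using assms by (simp add: norm_mult power2_eq_square mult_ac)
qed

text \<open>Clearing the denominators leaves an exponential in \<open>\<tau>\<close> plus an affine function of \<open>\<tau>\<close>:
  this gives the decay of \<open>F\<close> for large \<open>\<tau>\<close>, and it is the identity behind the independence argument.\<close>

lemma cis_quot_diff_mult_eq:
  assumes "\<tau> + r \<noteq> 0" "\<tau> - r \<noteq> 0"
  shows "cis (- (t * \<tau>)) * (cis_quot t (\<tau> + r) - cis_quot t (\<tau> - r)) * complex_of_real ((\<tau> + r) * (\<tau> - r))
     = - complex_of_real (2 * r) * cis (- (t * \<tau>)) - complex_of_real \<tau> * (cis (t * r) - cis (- (t * r)))
       + complex_of_real r * (cis (t * r) + cis (- (t * r)))"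
proof -
  have clear_denominators: "((1 - p) / a - (1 - q) / b) * (a * b) = (1 - p) * b - (1 - q) * a"
    if "a \<noteq> 0" "b \<noteq> 0" for a b p q :: complex
    using that by (simp add: field_simps)
  have "complex_of_real (\<tau> + r) \<noteq> 0" "complex_of_real (\<tau> - r) \<noteq> 0"
    using assms by (metis of_real_eq_0_iff)+
  then have "(cis_quot t (\<tau> + r) - cis_quot t (\<tau> - r)) * complex_of_real ((\<tau> + r) * (\<tau> - r))
      = (1 - cis (t * (\<tau> + r))) * complex_of_real (\<tau> - r) - (1 - cis (t * (\<tau> - r))) * complex_of_real (\<tau> + r)"
    unfolding cis_quot_def of_real_mult by (rule clear_denominators)
  then have "cis (- (t * \<tau>)) * (cis_quot t (\<tau> + r) - cis_quot t (\<tau> - r)) * complex_of_real ((\<tau> + r) * (\<tau> - r))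
      = cis (- (t * \<tau>)) * ((1 - cis (t * (\<tau> + r))) * complex_of_real (\<tau> - r)
          - (1 - cis (t * (\<tau> - r))) * complex_of_real (\<tau> + r))"
    by (simp only: mult.assoc)
  also have "\<dots> = cis (- (t * \<tau>)) * complex_of_real (\<tau> - r) - (cis (- (t * \<tau>)) * cis (t * (\<tau> + r))) * complex_of_real (\<tau> - r)
        - cis (- (t * \<tau>)) * complex_of_real (\<tau> + r) + (cis (- (t * \<tau>)) * cis (t * (\<tau> - r))) * complex_of_real (\<tau> + r)"
    by (simp add: algebra_simps)
  also have "cis (- (t * \<tau>)) * cis (t * (\<tau> + r)) = cis (t * r)"
    by (simp add: cis_mult algebra_simps)
  also have "cis (- (t * \<tau>)) * cis (t * (\<tau> - r)) = cis (- (t * r))"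
    by (simp add: cis_mult algebra_simps)
  finally show ?thesis
    by (simp add: algebra_simps)
qed

lemma norm_cis_quot_diff_mult_le:
  assumes "\<tau> + r \<noteq> 0" "\<tau> - r \<noteq> 0" "r \<ge> 0" "t \<ge> 0"
  shows "cmod (cis_quot t (\<tau> + r) - cis_quot t (\<tau> - r)) * \<bar>(\<tau> + r) * (\<tau> - r)\<bar>
           \<le> 4 * r + 2 * \<bar>\<tau>\<bar> * t * r"
proof -
  have sin_part: "cmod (cis (t * r) - cis (- (t * r))) \<le> 2 * t * r"
    using norm_cis_diff_le[of "t * r" "- (t * r)"] assms by (simp add: mult_ac)
  have cos_part: "cmod (cis (t * r) + cis (- (t * r))) \<le> 2"
    using norm_triangle_ineq[of "cis (t * r)" "cis (- (t * r))"] by simp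
  have "cmod (cis_quot t (\<tau> + r) - cis_quot t (\<tau> - r)) * \<bar>(\<tau> + r) * (\<tau> - r)\<bar>
     = cmod (cis (- (t * \<tau>)) * (cis_quot t (\<tau> + r) - cis_quot t (\<tau> - r)) * complex_of_real ((\<tau> + r) * (\<tau> - r)))"
    by (simp only: norm_mult norm_cis norm_of_real mult_1)
  also have "\<dots> \<le> 2 * r + \<bar>\<tau>\<bar> * cmod (cis (t * r) - cis (- (t * r))) + r * cmod (cis (t * r) + cis (- (t * r)))"
    unfolding cis_quot_diff_mult_eq[OF assms(1,2)] using assms(3)
    by (intro norm_triangle_le norm_triangle_le_diff add_mono) (auto simp: norm_mult)
  also have "\<dots> \<le> 2 * r + \<bar>\<tau>\<bar> * (2 * t * r) + r * 2"
    using sin_part cos_part assms(3) by (intro add_mono mult_left_mono) auto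
  finally show ?thesis
    by (simp add: algebra_simps)
qed

lemma Fker_eq_cis_quot:
  "Fker t x \<tau> \<xi> = cis (- (\<xi> \<bullet> x) - \<tau> * t) / complex_of_real (2 * norm \<xi>) *
     (cis_quot t (\<tau> + norm \<xi>) - cis_quot t (\<tau> - norm \<xi>))"
  unfolding Fker_def cis_quot_def ..

lemma norm_Fker:
  "cmod (Fker t x \<tau> \<xi>) = cmod (cis_quot t (\<tau> + norm \<xi>) - cis_quot t (\<tau> - norm \<xi>)) / (2 * norm \<xi>)"
  unfolding Fker_eq_cis_quot by (simp add: norm_mult norm_divide)

lemma norm_Fker_sq_le:
  assumes "t \<ge> 0" "\<xi> \<noteq> 0"
  shows "(cmod (Fker t x \<tau> \<xi>))\<^sup>2 \<le> (t\<^sup>2 + 4) / (norm \<xi>)\<^sup>2 *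
           (1 / (1 + (\<tau> + norm \<xi>)\<^sup>2) + 1 / (1 + (\<tau> - norm \<xi>)\<^sup>2))"
proof -
  define r where "r = norm \<xi>"
  have r: "r > 0"
    using assms unfolding r_def by simp
  define u where "u = cmod (cis_quot t (\<tau> + r))"
  define v where "v = cmod (cis_quot t (\<tau> - r))"
  have "(cmod (cis_quot t (\<tau> + r) - cis_quot t (\<tau> - r)))\<^sup>2 \<le> (u + v)\<^sup>2"
    unfolding u_def v_def by (intro power_mono norm_triangle_ineq4) simp
  also have "\<dots> \<le> 2 * u\<^sup>2 + 2 * v\<^sup>2"
    using sum_squares_bound[of u v] by (simp add: power2_sum)
  also have "\<dots> \<le> 2 * ((2 * t\<^sup>2 + 8) / (1 + (\<tau> + r)\<^sup>2)) + 2 * ((2 * t\<^sup>2 + 8) / (1 + (\<tau> - r)\<^sup>2))"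
    unfolding u_def v_def using norm_cis_quot_sq_le[OF assms(1)] by (intro add_mono mult_left_mono) auto
  finally have "(cmod (cis_quot t (\<tau> + r) - cis_quot t (\<tau> - r)))\<^sup>2
      \<le> 4 * ((t\<^sup>2 + 4) * (1 / (1 + (\<tau> + r)\<^sup>2) + 1 / (1 + (\<tau> - r)\<^sup>2)))"
    by (simp add: algebra_simps add_divide_distrib)
  then have "(cmod (cis_quot t (\<tau> + r) - cis_quot t (\<tau> - r)))\<^sup>2 / (4 * r\<^sup>2)
      \<le> 4 * ((t\<^sup>2 + 4) * (1 / (1 + (\<tau> + r)\<^sup>2) + 1 / (1 + (\<tau> - r)\<^sup>2))) / (4 * r\<^sup>2)"
    by (rule divide_right_mono) simp
  then show ?thesis
    using r unfolding norm_Fker r_def[symmetric] by (simp add: power_divide power_mult_distrib)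
qed

lemma norm_Fker_le_time_sq:
  assumes "t \<ge> 0" "\<xi> \<noteq> 0" "\<tau> \<noteq> norm \<xi>" "\<tau> \<noteq> - norm \<xi>"
  shows "cmod (Fker t x \<tau> \<xi>) \<le> t\<^sup>2"
proof -
  have "cmod (cis_quot t (\<tau> + norm \<xi>) - cis_quot t (\<tau> - norm \<xi>)) \<le> t\<^sup>2 * (2 * norm \<xi>)"
    using norm_cis_quot_diff_le[of "\<tau> + norm \<xi>" "\<tau> - norm \<xi>" t] assms by auto
  then show ?thesis
    using assms(2) unfolding norm_Fker by (simp add: divide_le_eq mult_ac)
qed

lemma norm_Fker_mult_abs_le:
  assumes "t \<ge> 0" "\<xi> \<noteq> 0" "norm \<xi> \<le> 1" "2 \<le> \<bar>\<tau>\<bar>"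
  shows "cmod (Fker t x \<tau> \<xi>) * (3 / 4 * \<bar>\<tau>\<bar>) \<le> 1 + t"
proof -
  define r where "r = norm \<xi>"
  have r: "0 < r" "r \<le> 1"
    using assms unfolding r_def by auto
  define B where "B = cmod (cis_quot t (\<tau> + r) - cis_quot t (\<tau> - r))"
  have "2 * 2 \<le> \<bar>\<tau>\<bar> * \<bar>\<tau>\<bar>"
    using assms(4) by (intro mult_mono) auto
  then have tau: "3 / 4 * \<tau>\<^sup>2 \<le> \<tau>\<^sup>2 - r\<^sup>2"
    using r power_le_one[of r 2] by (simp add: power2_eq_square abs_mult_self)
  have "(\<tau> + r) * (\<tau> - r) = \<tau>\<^sup>2 - r\<^sup>2"
    by (simp add: power2_eq_square algebra_simps)
  with tau have "3 / 4 * \<tau>\<^sup>2 \<le> \<bar>(\<tau> + r) * (\<tau> - r)\<bar>"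
    using abs_ge_self[of "(\<tau> + r) * (\<tau> - r)"] by linarith
  then have "B * (3 / 4 * \<tau>\<^sup>2) \<le> B * \<bar>(\<tau> + r) * (\<tau> - r)\<bar>"
    unfolding B_def by (rule mult_left_mono) simp
  also have "\<dots> \<le> 4 * r + 2 * \<bar>\<tau>\<bar> * t * r"
    unfolding B_def using norm_cis_quot_diff_mult_le[of \<tau> r t] r assms by auto
  also have "\<dots> \<le> 2 * r * (\<bar>\<tau>\<bar> * (1 + t))"
    using r assms(4) by (simp add: algebra_simps)
  finally have "B / (2 * r) * (3 / 4 * \<bar>\<tau>\<bar>) * \<bar>\<tau>\<bar> \<le> (1 + t) * \<bar>\<tau>\<bar>"
    using r by (simp add: field_simps power2_eq_square)
  then have "B / (2 * r) * (3 / 4 * \<bar>\<tau>\<bar>) \<le> 1 + t"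
    by (rule mult_right_le_imp_le) (use assms(4) in simp)
  then show ?thesis
    unfolding norm_Fker r_def[symmetric] B_def[symmetric] .
qed

lemma norm_Fker_sq_le_low_frequency:
  assumes "t \<ge> 0" "\<xi> \<noteq> 0" "norm \<xi> \<le> 1" "\<tau> \<noteq> norm \<xi>" "\<tau> \<noteq> - norm \<xi>"
  shows "(cmod (Fker t x \<tau> \<xi>))\<^sup>2 \<le> (5 * t ^ 4 + 4 * (1 + t)\<^sup>2) / (1 + \<tau>\<^sup>2)"
proof (cases "\<bar>\<tau>\<bar> < 2")
  case True
  then have "\<tau>\<^sup>2 \<le> 4"
    using abs_le_square_iff[of \<tau> 2] by simp
  have "(cmod (Fker t x \<tau> \<xi>))\<^sup>2 \<le> (t\<^sup>2)\<^sup>2"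
    using norm_Fker_le_time_sq[OF assms(1,2,4,5), of x] by (intro power_mono) auto
  also have "\<dots> = t ^ 4"
    by simp
  finally have "(cmod (Fker t x \<tau> \<xi>))\<^sup>2 * (1 + \<tau>\<^sup>2) \<le> t ^ 4 * 5"
    using \<open>\<tau>\<^sup>2 \<le> 4\<close> by (intro mult_mono) auto
  moreover have "0 \<le> 4 * (1 + t)\<^sup>2"
    by simp
  ultimately have "(cmod (Fker t x \<tau> \<xi>))\<^sup>2 * (1 + \<tau>\<^sup>2) \<le> 5 * t ^ 4 + 4 * (1 + t)\<^sup>2"
    by linarith
  then show ?thesis
    by (simp add: le_divide_eq add_pos_nonneg)
next
  case False
  then have tau: "2 \<le> \<bar>\<tau>\<bar>" "4 \<le> \<tau>\<^sup>2"
    using abs_le_square_iff[of 2 \<tau>] by auto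
  have "(cmod (Fker t x \<tau> \<xi>) * (3 / 4 * \<bar>\<tau>\<bar>))\<^sup>2 \<le> (1 + t)\<^sup>2"
    using norm_Fker_mult_abs_le[OF assms(1-3) tau(1)] by (intro power_mono) auto
  then have "(cmod (Fker t x \<tau> \<xi>))\<^sup>2 * (9 / 16 * \<tau>\<^sup>2) \<le> (1 + t)\<^sup>2"
    by (simp add: power_mult_distrib power_divide)
  moreover have "(cmod (Fker t x \<tau> \<xi>))\<^sup>2 * (1 + \<tau>\<^sup>2) \<le> (cmod (Fker t x \<tau> \<xi>))\<^sup>2 * (4 * (9 / 16 * \<tau>\<^sup>2))"
    using tau by (intro mult_left_mono) auto
  ultimately have "(cmod (Fker t x \<tau> \<xi>))\<^sup>2 * (1 + \<tau>\<^sup>2) \<le> 5 * t ^ 4 + 4 * (1 + t)\<^sup>2"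
    using assms(1) by (simp add: mult_ac) (smt (verit) zero_le_power)
  then show ?thesis
    by (simp add: le_divide_eq add_pos_nonneg)
qed

section \<open>Square integrability of the integrand\<close>

definition powr_profile :: "real \<Rightarrow> real \<Rightarrow> real \<Rightarrow> real" where
  "powr_profile p q s = (if \<bar>s\<bar> \<le> 1 then \<bar>s\<bar> powr - p else \<bar>s\<bar> powr - q)"

lemma powr_profile_nonneg: "0 \<le> powr_profile p q s"
  by (simp add: powr_profile_def)

lemma borel_measurable_powr_profile [measurable]: "powr_profile p q \<in> borel_measurable borel"
  unfolding powr_profile_def by measurable

lemma powr_profile_antimono:
  assumes "0 \<le> p" "0 \<le> q" "s \<noteq> 0" "\<bar>s\<bar> \<le> \<bar>s'\<bar>"
  shows "powr_profile p q s' \<le> powr_profile p q s"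
proof -
  have "\<bar>s'\<bar> powr - p \<le> \<bar>s\<bar> powr - p" "\<bar>s'\<bar> powr - q \<le> \<bar>s\<bar> powr - q"
    using assms by (auto intro!: powr_mono2')
  moreover have "\<bar>s'\<bar> powr - q \<le> \<bar>s\<bar> powr - p" if "\<bar>s\<bar> \<le> 1" "1 < \<bar>s'\<bar>"
  proof -
    have "\<bar>s'\<bar> powr - q \<le> 1 powr - q"
      using that assms by (intro powr_mono2') auto
    also have "\<dots> = 1 powr - p"
      by simp
    also have "\<dots> \<le> \<bar>s\<bar> powr - p"
      using that assms by (intro powr_mono2') auto
    finally show ?thesis .
  qed
  ultimately show ?thesis
    using assms(4) by (auto simp: powr_profile_def)
qed

lemma powr_profile_power:
  assumes "n > 0"
  shows "powr_profile (p / n) (q / n) s ^ n = powr_profile p q s"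
  using assms by (auto simp: powr_profile_def powr_powr simp flip: powr_realpow')

lemma powr_profile_mult_powr:
  "\<bar>s\<bar> powr - a * powr_profile p q s = powr_profile (a + p) (a + q) s"
  by (simp add: powr_profile_def powr_add[symmetric] algebra_simps)

text \<open>Dominating the radial profile by a product of one-dimensional ones reduces integrability on
  \<open>\<real>\<^sup>k\<close> to integrability on \<open>\<real>\<close>; compare with the largest coordinate of \<open>\<xi>\<close>.\<close>

lemma powr_profile_le_prod_Basis:
  fixes \<xi> :: "'a::euclidean_space"
  assumes "0 \<le> p" "0 \<le> q" and nonzero: "\<forall>b\<in>Basis. \<xi> \<bullet> b \<noteq> 0"
  shows "powr_profile p q (norm \<xi>) \<le> (\<Prod>b\<in>Basis. powr_profile (p / DIM('a)) (q / DIM('a)) (\<xi> \<bullet> b))"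
proof -
  define M where "M = Max ((\<lambda>b. \<bar>\<xi> \<bullet> b\<bar>) ` Basis)"
  have "M \<in> (\<lambda>b. \<bar>\<xi> \<bullet> b\<bar>) ` Basis"
    unfolding M_def by (rule Max_in) (auto simp: nonempty_Basis)
  then obtain b0 where "b0 \<in> Basis" "M = \<bar>\<xi> \<bullet> b0\<bar>"
    by blast
  then have M: "0 < M" "M \<le> norm \<xi>"
    using nonzero Basis_le_norm by auto
  have M_ge: "\<bar>\<xi> \<bullet> b\<bar> \<le> M" if "b \<in> Basis" for b
    unfolding M_def using that by (intro Max_ge) auto
  have "powr_profile p q (norm \<xi>) \<le> powr_profile p q M"
    using M assms by (intro powr_profile_antimono) auto
  also have "\<dots> = powr_profile (p / DIM('a)) (q / DIM('a)) M ^ DIM('a)"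
    by (simp add: powr_profile_power)
  also have "\<dots> = (\<Prod>b\<in>(Basis :: 'a set). powr_profile (p / DIM('a)) (q / DIM('a)) M)"
    by simp
  also have "\<dots> \<le> (\<Prod>b\<in>Basis. powr_profile (p / DIM('a)) (q / DIM('a)) (\<xi> \<bullet> b))"
    using assms M M_ge by (intro prod_mono conjI powr_profile_nonneg powr_profile_antimono) auto
  finally show ?thesis .
qed

lemma nn_integral_powr_profile_finite:
  assumes "p < 1" "1 < q"
  shows "(\<integral>\<^sup>+s. ennreal (powr_profile p q s) \<partial>lborel) < \<infinity>"
proof -
  define K where "K u = ennreal (u powr - p) * indicator {0..1} u + ennreal (u powr - q) * indicator {1..} u"
    for u :: real
  have [measurable]: "K \<in> borel_measurable borel"
    unfolding K_def by measurable
  have "(\<integral>\<^sup>+u. ennreal (u powr - p) * indicator {0..1} u \<partial>lborel) = ennreal (1 / (1 - p))"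
    using nn_integral_has_integral_lebesgue'[OF _ has_integral_powr_from_0[of "- p" 1]] assms by simp
  moreover have "(\<integral>\<^sup>+u. ennreal (u powr - q) * indicator {1..} u \<partial>lborel) = ennreal (1 / (q - 1))"
    using nn_integral_has_integral_lebesgue'[OF _ has_integral_powr_to_inf[of "- q" 1]] assms
    by (simp add: divide_simps)
  ultimately have K: "(\<integral>\<^sup>+u. K u \<partial>lborel) < \<infinity>"
    unfolding K_def by (subst nn_integral_add) auto
  have "ennreal (powr_profile p q s) \<le> K s + K (- s)" for s
    by (cases "0 \<le> s") (auto simp: K_def powr_profile_def indicator_def add_increasing add_increasing2)
  then have "(\<integral>\<^sup>+s. ennreal (powr_profile p q s) \<partial>lborel) \<le> (\<integral>\<^sup>+s. K s + K (- s) \<partial>lborel)"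
    by (rule nn_integral_mono)
  also have "\<dots> = (\<integral>\<^sup>+s. K s \<partial>lborel) + (\<integral>\<^sup>+s. K (- s) \<partial>lborel)"
    by (rule nn_integral_add) auto
  also have "\<dots> < \<infinity>"
    using K nn_integral_real_affine[of K "-1" 0] by simp
  finally show ?thesis .
qed

lemma AE_lborel_inner_Basis_nonzero:
  "AE \<xi> in (lborel :: 'a::euclidean_space measure). \<forall>b\<in>Basis. \<xi> \<bullet> b \<noteq> 0"
proof -
  have "negligible (\<Union>b\<in>Basis. {x :: 'a. b \<bullet> x = 0})"
    by (intro negligible_Union) (auto intro!: negligible_hyperplane simp: nonzero_Basis)
  then have "AE x in lebesgue. x \<notin> (\<Union>b\<in>Basis. {x :: 'a. b \<bullet> x = 0})"
    by (intro AE_not_in) (simp add: negligible_iff_null_sets)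
  then show ?thesis
    by (simp add: AE_completion_iff inner_commute)
qed

lemma borel_measurable_cis [measurable (raw)]:
  "f \<in> borel_measurable M \<Longrightarrow> (\<lambda>x. cis (f x)) \<in> borel_measurable M"
  by (rule borel_measurable_continuous_on[where f = cis]) (auto intro!: continuous_intros)

lemma borel_measurable_complex_of_real [measurable (raw)]:
  "f \<in> borel_measurable M \<Longrightarrow> (\<lambda>x. complex_of_real (f x)) \<in> borel_measurable M"
  by (rule measurable_compose[OF _ borel_measurable_of_real])

lemma borel_measurable_Fker_fixed_frequency [measurable]:
  "(\<lambda>\<tau>. Fker t x \<tau> \<xi>) \<in> borel_measurable borel"
  unfolding Fker_def by measurable

lemma borel_measurable_Gker [measurable]:
  "(\<lambda>q :: real \<times> (real^'k). Gker \<beta> t x (fst q) (snd q)) \<in> borel_measurable borel"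
proof -
  have "(\<lambda>q :: real \<times> (real^'k). Gker \<beta> t x (fst q) (snd q)) \<in> borel_measurable (borel \<Otimes>\<^sub>M borel)"
    unfolding Gker_def Fker_def by measurable
  then show ?thesis
    by (simp add: borel_prod)
qed

lemma nn_integral_inverse_one_plus_square_finite:
  "(\<integral>\<^sup>+s. ennreal (1 / (1 + s\<^sup>2)) \<partial>lborel) < \<infinity>"
proof -
  have "integrable lborel (\<lambda>s :: real. inverse (1 + s\<^sup>2))"
    using integrable_inverse_1_plus_square by (simp add: set_integrable_def einterval_def)
  then show ?thesis
    by (simp add: integrable_iff_bounded divide_inverse)
qed

lemma nn_integral_norm_Fker_sq_le_low_frequency:
  assumes "t \<ge> 0" "\<xi> \<noteq> 0" "norm \<xi> \<le> 1"
  shows "(\<integral>\<^sup>+\<tau>. ennreal ((cmod (Fker t x \<tau> \<xi>))\<^sup>2) \<partial>lborel)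
           \<le> ennreal (5 * t ^ 4 + 4 * (1 + t)\<^sup>2) * (\<integral>\<^sup>+s. ennreal (1 / (1 + s\<^sup>2)) \<partial>lborel)"
proof -
  have "AE \<tau> in lborel. ennreal ((cmod (Fker t x \<tau> \<xi>))\<^sup>2)
          \<le> ennreal (5 * t ^ 4 + 4 * (1 + t)\<^sup>2) * ennreal (1 / (1 + \<tau>\<^sup>2))"
    using AE_lborel_singleton[of "norm \<xi>"] AE_lborel_singleton[of "- norm \<xi>"]
  proof eventually_elim
    case (elim \<tau>)
    then have "(cmod (Fker t x \<tau> \<xi>))\<^sup>2 \<le> (5 * t ^ 4 + 4 * (1 + t)\<^sup>2) * (1 / (1 + \<tau>\<^sup>2))"
      using norm_Fker_sq_le_low_frequency[OF assms, of \<tau> x] by simp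
    then show ?case
      using assms(1) by (subst ennreal_mult[symmetric]) (auto intro!: ennreal_leI)
  qed
  then have "(\<integral>\<^sup>+\<tau>. ennreal ((cmod (Fker t x \<tau> \<xi>))\<^sup>2) \<partial>lborel)
      \<le> (\<integral>\<^sup>+\<tau>. ennreal (5 * t ^ 4 + 4 * (1 + t)\<^sup>2) * ennreal (1 / (1 + \<tau>\<^sup>2)) \<partial>lborel)"
    by (rule nn_integral_mono_AE)
  then show ?thesis
    by (simp add: nn_integral_cmult)
qed

lemma nn_integral_norm_Fker_sq_le_inverse_norm_sq:
  assumes "t \<ge> 0" "\<xi> \<noteq> 0"
  shows "(\<integral>\<^sup>+\<tau>. ennreal ((cmod (Fker t x \<tau> \<xi>))\<^sup>2) \<partial>lborel)
           \<le> ennreal (2 * (t\<^sup>2 + 4) / (norm \<xi>)\<^sup>2) * (\<integral>\<^sup>+s. ennreal (1 / (1 + s\<^sup>2)) \<partial>lborel)"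
proof -
  define r where "r = norm \<xi>"
  define I where "I = (\<integral>\<^sup>+s. ennreal (1 / (1 + s\<^sup>2)) \<partial>lborel)"
  have shift: "(\<integral>\<^sup>+\<tau>. ennreal (1 / (1 + (\<tau> + c)\<^sup>2)) \<partial>lborel) = I" for c
    unfolding I_def using nn_integral_real_affine[of "\<lambda>s. ennreal (1 / (1 + s\<^sup>2))" 1 c]
    by (simp add: add.commute)
  have "(\<integral>\<^sup>+\<tau>. ennreal ((cmod (Fker t x \<tau> \<xi>))\<^sup>2) \<partial>lborel)
      \<le> (\<integral>\<^sup>+\<tau>. ennreal ((t\<^sup>2 + 4) / r\<^sup>2) *
            (ennreal (1 / (1 + (\<tau> + r)\<^sup>2)) + ennreal (1 / (1 + (\<tau> + - r)\<^sup>2))) \<partial>lborel)"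
    using norm_Fker_sq_le[OF assms, of x]
    by (intro nn_integral_mono)
       (auto simp: r_def add_pos_nonneg simp flip: ennreal_mult ennreal_plus intro!: ennreal_leI)
  also have "\<dots> = ennreal ((t\<^sup>2 + 4) / r\<^sup>2) * (I + I)"
    using shift[of r] shift[of "- r"] by (simp add: nn_integral_cmult nn_integral_add)
  also have "\<dots> = ennreal (2 * (t\<^sup>2 + 4) / r\<^sup>2) * I"
  proof -
    have "ennreal (2 * (t\<^sup>2 + 4) / r\<^sup>2) = 2 * ennreal ((t\<^sup>2 + 4) / r\<^sup>2)"
      using ennreal_mult[of 2 "(t\<^sup>2 + 4) / r\<^sup>2"] by simp
    then show ?thesis
      by (simp add: mult_2[symmetric] mult_ac)
  qed
  finally show ?thesis
    unfolding r_def I_def .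
qed

lemma nn_integral_norm_Fker_sq_le:
  assumes "t \<ge> 0"
  obtains C where "0 \<le> C" "\<And>x \<xi>. \<xi> \<noteq> 0 \<Longrightarrow>
    (\<integral>\<^sup>+\<tau>. ennreal ((cmod (Fker t x \<tau> \<xi>))\<^sup>2) \<partial>lborel) \<le> ennreal (C * powr_profile 0 2 (norm \<xi>))"
proof -
  define I where "I = (\<integral>\<^sup>+s. ennreal (1 / (1 + s\<^sup>2)) \<partial>lborel)"
  define K where "K = 5 * t ^ 4 + 4 * (1 + t)\<^sup>2 + 2 * (t\<^sup>2 + 4)"
  have I: "I = ennreal (enn2real I)"
    using nn_integral_inverse_one_plus_square_finite unfolding I_def by simp
  have K: "0 \<le> K"
    using assms by (simp add: K_def)
  have "(\<integral>\<^sup>+\<tau>. ennreal ((cmod (Fker t x \<tau> \<xi>))\<^sup>2) \<partial>lborel) \<le> ennreal (K * enn2real I * powr_profile 0 2 (norm \<xi>))"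
    if "\<xi> \<noteq> 0" for x \<xi> :: "real^'k"
  proof -
    have "(\<integral>\<^sup>+\<tau>. ennreal ((cmod (Fker t x \<tau> \<xi>))\<^sup>2) \<partial>lborel) \<le> ennreal (K * powr_profile 0 2 (norm \<xi>)) * I"
    proof (cases "norm \<xi> \<le> 1")
      case True
      have "5 * t ^ 4 + 4 * (1 + t)\<^sup>2 \<le> K * powr_profile 0 2 (norm \<xi>)"
        using True that by (simp add: K_def powr_profile_def)
      then show ?thesis
        using nn_integral_norm_Fker_sq_le_low_frequency[OF assms that True, of x] unfolding I_def
        by (elim order_trans) (intro mult_right_mono ennreal_leI, auto)
    next
      case False
      have "2 * (t\<^sup>2 + 4) / (norm \<xi>)\<^sup>2 \<le> K * powr_profile 0 2 (norm \<xi>)"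
        using False unfolding K_def powr_profile_def
        by (simp add: powr_minus powr_realpow divide_inverse) (intro mult_right_mono, simp_all)
      then show ?thesis
        using nn_integral_norm_Fker_sq_le_inverse_norm_sq[OF assms that, of x] unfolding I_def
        by (elim order_trans) (intro mult_right_mono ennreal_leI, auto)
    qed
    also have "\<dots> = ennreal (K * enn2real I * powr_profile 0 2 (norm \<xi>))"
      using K by (subst I) (simp add: powr_profile_nonneg ennreal_mult'' mult_ac)
    finally show ?thesis .
  qed
  then show thesis
    using K by (intro that[of "K * enn2real I"]) auto
qed

lemma norm_Gker_sq:
  fixes \<xi> :: "real^'k"
  shows "(cmod (Gker \<beta> t x \<tau> \<xi>))\<^sup>2 = norm \<xi> powr - (real CARD('k) - \<beta>) * (cmod (Fker t x \<tau> \<xi>))\<^sup>2"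
proof -
  have "(norm \<xi> powr (- (real CARD('k) - \<beta>) / 2))\<^sup>2 = norm \<xi> powr - (real CARD('k) - \<beta>)"
    by (simp add: power2_eq_square flip: powr_add)
  then show ?thesis
    unfolding Gker_def by (simp add: norm_mult power_mult_distrib)
qed

lemma nn_integral_norm_Gker_sq_le:
  assumes "t \<ge> 0"
  obtains C where "0 \<le> C" "\<And>x \<xi>. \<xi> \<noteq> 0 \<Longrightarrow>
    (\<integral>\<^sup>+\<tau>. ennreal ((cmod (Gker \<beta> t x \<tau> \<xi>))\<^sup>2) \<partial>lborel)
      \<le> ennreal (C * powr_profile (real CARD('k) - \<beta>) (real CARD('k) - \<beta> + 2) (norm (\<xi> :: real^'k)))"
proof -
  define a where "a = real CARD('k) - \<beta>"
  obtain C where C: "0 \<le> C" "\<And>x \<xi>. \<xi> \<noteq> 0 \<Longrightarrow>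
    (\<integral>\<^sup>+\<tau>. ennreal ((cmod (Fker t x \<tau> \<xi>))\<^sup>2) \<partial>lborel) \<le> ennreal (C * powr_profile 0 2 (norm (\<xi> :: real^'k)))"
    using nn_integral_norm_Fker_sq_le[OF assms] by metis
  have "(\<integral>\<^sup>+\<tau>. ennreal ((cmod (Gker \<beta> t x \<tau> \<xi>))\<^sup>2) \<partial>lborel) \<le> ennreal (C * powr_profile a (a + 2) (norm \<xi>))"
    if "\<xi> \<noteq> 0" for x and \<xi> :: "real^'k"
  proof -
    have "(\<integral>\<^sup>+\<tau>. ennreal ((cmod (Gker \<beta> t x \<tau> \<xi>))\<^sup>2) \<partial>lborel)
        = ennreal (norm \<xi> powr - a) * (\<integral>\<^sup>+\<tau>. ennreal ((cmod (Fker t x \<tau> \<xi>))\<^sup>2) \<partial>lborel)"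
      by (simp add: norm_Gker_sq a_def ennreal_mult flip: nn_integral_cmult)
    also have "\<dots> \<le> ennreal (norm \<xi> powr - a) * ennreal (C * powr_profile 0 2 (norm \<xi>))"
      using C(2)[OF that] by (rule mult_left_mono) simp
    also have "\<dots> = ennreal (C * powr_profile a (a + 2) (norm \<xi>))"
      using C(1) powr_profile_mult_powr[of "norm \<xi>" a 0 2]
      by (simp add: powr_profile_nonneg mult_ac flip: ennreal_mult)
    finally show ?thesis .
  qed
  with C(1) show thesis
    unfolding a_def by (rule that)
qed

lemma nn_integral_norm_Gker_sq_finite:
  fixes x :: "real^'k"
  assumes "t \<ge> 0" "0 < \<beta>" "\<beta> < 2" "\<beta> \<le> real CARD('k)"
  shows "(\<integral>\<^sup>+q. ennreal ((cmod (Gker \<beta> t x (fst q) (snd q)))\<^sup>2) \<partial>(lborel :: (real \<times> (real^'k)) measure)) < \<infinity>"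
proof -
  define a where "a = real CARD('k) - \<beta>"
  define g where "g s = powr_profile (a / CARD('k)) ((a + 2) / CARD('k)) s" for s
  obtain C where C: "0 \<le> C" "\<And>\<xi>. \<xi> \<noteq> 0 \<Longrightarrow>
    (\<integral>\<^sup>+\<tau>. ennreal ((cmod (Gker \<beta> t x \<tau> \<xi>))\<^sup>2) \<partial>lborel) \<le> ennreal (C * powr_profile a (a + 2) (norm \<xi>))"
    using nn_integral_norm_Gker_sq_le[OF assms(1)] unfolding a_def by metis
  have "AE \<xi> in lborel. (\<integral>\<^sup>+\<tau>. ennreal ((cmod (Gker \<beta> t x \<tau> \<xi>))\<^sup>2) \<partial>lborel)
          \<le> ennreal C * (\<Prod>b\<in>Basis. ennreal (g (\<xi> \<bullet> b)))"
    using AE_lborel_inner_Basis_nonzero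
  proof eventually_elim
    case (elim \<xi>)
    then have "\<xi> \<noteq> 0"
      using nonempty_Basis by fastforce
    then have "(\<integral>\<^sup>+\<tau>. ennreal ((cmod (Gker \<beta> t x \<tau> \<xi>))\<^sup>2) \<partial>lborel) \<le> ennreal (C * powr_profile a (a + 2) (norm \<xi>))"
      by (rule C(2))
    also have "\<dots> \<le> ennreal (C * (\<Prod>b\<in>Basis. g (\<xi> \<bullet> b)))"
      using powr_profile_le_prod_Basis[of a "a + 2" \<xi>] elim assms C(1)
      by (intro ennreal_leI mult_left_mono) (auto simp: a_def g_def)
    also have "\<dots> = ennreal C * (\<Prod>b\<in>Basis. ennreal (g (\<xi> \<bullet> b)))"
      using C(1) by (simp add: ennreal_mult prod_ennreal g_def powr_profile_nonneg prod_nonneg)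
    finally show ?case .
  qed
  then have "(\<integral>\<^sup>+\<xi>. (\<integral>\<^sup>+\<tau>. ennreal ((cmod (Gker \<beta> t x \<tau> \<xi>))\<^sup>2) \<partial>lborel) \<partial>lborel)
      \<le> (\<integral>\<^sup>+\<xi>. ennreal C * (\<Prod>b\<in>Basis. ennreal (g (\<xi> \<bullet> b))) \<partial>(lborel :: (real^'k) measure))"
    by (rule nn_integral_mono_AE)
  also have "\<dots> = ennreal C * (\<Prod>b\<in>(Basis :: (real^'k) set). (\<integral>\<^sup>+s. ennreal (g s) \<partial>lborel))"
    using nn_integral_lborel_prod[of "\<lambda>(_ :: real^'k) s. ennreal (g s)"] by (simp add: g_def nn_integral_cmult)
  also have "\<dots> < \<infinity>"
  proof -
    have "(\<integral>\<^sup>+s. ennreal (g s) \<partial>lborel) < \<infinity>"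
      unfolding g_def using assms by (intro nn_integral_powr_profile_finite) (simp_all add: a_def)
    then show ?thesis
      by (simp add: ennreal_mult_less_top power_less_top_ennreal)
  qed
  also have "(\<integral>\<^sup>+\<xi>. (\<integral>\<^sup>+\<tau>. ennreal ((cmod (Gker \<beta> t x \<tau> \<xi>))\<^sup>2) \<partial>lborel) \<partial>lborel)
      = (\<integral>\<^sup>+q. ennreal ((cmod (Gker \<beta> t x (fst q) (snd q)))\<^sup>2) \<partial>(lborel \<Otimes>\<^sub>M lborel))"
    using pair_sigma_finite.nn_integral_snd[of lborel lborel "\<lambda>q. ennreal ((cmod (Gker \<beta> t x (fst q) (snd q)))\<^sup>2)"]
    by (simp add: pair_sigma_finite_def lborel.sigma_finite_measure_axioms lborel_prod)
  finally show ?thesis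
    by (simp add: lborel_prod)
qed

section \<open>Wiener integrals\<close>

lemma sqint_zero: "sqint N (\<lambda>_. 0)"
  by (simp add: sqint_def)

lemma sqint_linear:
  assumes "sqint N f" "sqint N g"
  shows "sqint N (\<lambda>x. a * f x + b * g x)"
proof -
  have [measurable]: "f \<in> borel_measurable N" "g \<in> borel_measurable N"
    and "integrable N (\<lambda>x. (f x)\<^sup>2)" "integrable N (\<lambda>x. (g x)\<^sup>2)"
    using assms by (auto simp: sqint_def)
  then have "integrable N (\<lambda>x. 2 * a\<^sup>2 * (f x)\<^sup>2 + 2 * b\<^sup>2 * (g x)\<^sup>2)"
    by simp
  moreover have "(a * f x + b * g x)\<^sup>2 \<le> 2 * a\<^sup>2 * (f x)\<^sup>2 + 2 * b\<^sup>2 * (g x)\<^sup>2" for x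
    using zero_le_power2[of "a * f x - b * g x"] by (simp add: power2_eq_square algebra_simps)
  ultimately have "integrable N (\<lambda>x. (a * f x + b * g x)\<^sup>2)"
    by (elim Bochner_Integration.integrable_bound) auto
  then show ?thesis
    by (simp add: sqint_def)
qed

lemma sqint_sum:
  fixes n :: nat
  assumes "\<And>j. j < n \<Longrightarrow> sqint N (f j)"
  shows "sqint N (\<lambda>y. \<Sum>j<n. c j * f j y)"
  using assms
proof (induction n)
  case (Suc n)
  then show ?case
    using sqint_linear[of N "\<lambda>y. \<Sum>j<n. c j * f j y" "f n" 1 "c n"] by simp
qed (simp add: sqint_zero)

lemma isonormal_zero:
  assumes "isonormal M N W"
  shows "AE \<omega> in M. W (\<lambda>_. 0) \<omega> = 0"
proof -
  have "AE \<omega> in M. W (\<lambda>x. 1 * 0 + 1 * 0) \<omega> = 1 * W (\<lambda>_. 0) \<omega> + 1 * W (\<lambda>_. 0) \<omega>"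
    using assms sqint_zero unfolding isonormal_def by blast
  then show ?thesis
    by simp
qed

lemma isonormal_sum:
  fixes n :: nat
  assumes "isonormal M N W" "\<And>j. j < n \<Longrightarrow> sqint N (f j)"
  shows "AE \<omega> in M. W (\<lambda>y. \<Sum>j<n. c j * f j y) \<omega> = (\<Sum>j<n. c j * W (f j) \<omega>)"
  using assms(2)
proof (induction n)
  case 0
  then show ?case
    using isonormal_zero[OF assms(1)] by simp
next
  case (Suc n)
  have "sqint N (\<lambda>y. \<Sum>j<n. c j * f j y)" "sqint N (f n)"
    using sqint_sum[of n N f c] Suc.prems by auto
  then have "AE \<omega> in M. W (\<lambda>y. 1 * (\<Sum>j<n. c j * f j y) + c n * f n y) \<omega>
      = 1 * W (\<lambda>y. \<Sum>j<n. c j * f j y) \<omega> + c n * W (f n) \<omega>"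
    using assms(1) unfolding isonormal_def by blast
  moreover have "AE \<omega> in M. W (\<lambda>y. \<Sum>j<n. c j * f j y) \<omega> = (\<Sum>j<n. c j * W (f j) \<omega>)"
    using Suc by simp
  ultimately show ?case
    by eventually_elim simp
qed

text \<open>The characteristic function of \<open>W g\<close> at 1 is \<open>exp (- \<parallel>g\<parallel>\<^sup>2 / 2)\<close>, and it is 1 when \<open>W g\<close>
  vanishes almost surely.\<close>

lemma isonormal_AE_zero_imp_AE_zero:
  assumes "isonormal M N W" "sqint N g" and zero: "AE \<omega> in M. W g \<omega> = 0"
  shows "AE y in N. g y = 0"
proof -
  interpret prob_space M
    using assms(1) by (simp add: isonormal_def)
  have [measurable]: "W g \<in> borel_measurable M"
    and char: "char (distr M borel (W g)) 1 = complex_of_real (exp (- (\<integral>y. (g y)\<^sup>2 \<partial>N) / 2))"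
    using assms(1,2) unfolding isonormal_def by auto
  have "char (distr M borel (W g)) 1 = (CLINT \<omega>|M. iexp (W g \<omega>))"
    by (simp add: char_def integral_distr)
  also have "\<dots> = 1"
    using zero by (subst integral_cong_AE[where g = "\<lambda>_. 1"]) (auto simp: prob_space)
  finally have "(\<integral>y. (g y)\<^sup>2 \<partial>N) = 0"
    using char by simp
  then have "AE y in N. (g y)\<^sup>2 = 0"
    using assms(2) by (subst integral_nonneg_eq_0_iff_AE[symmetric]) (auto simp: sqint_def)
  then show ?thesis
    by simp
qed

lemma isonormal_AE_sum_zero_imp_AE_sum_zero:
  fixes n :: nat
  assumes "isonormal M N W" "\<And>j. j < n \<Longrightarrow> sqint N (f j)"
    and "AE \<omega> in M. (\<Sum>j<n. c j * W (f j) \<omega>) = 0"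
  shows "AE y in N. (\<Sum>j<n. c j * f j y) = 0"
proof (rule isonormal_AE_zero_imp_AE_zero[OF assms(1) sqint_sum[OF assms(2)]])
  show "AE \<omega> in M. W (\<lambda>y. \<Sum>j<n. c j * f j y) \<omega> = 0"
  proof -
    have "AE \<omega> in M. W (\<lambda>y. \<Sum>j<n. c j * f j y) \<omega> = (\<Sum>j<n. c j * W (f j) \<omega>)"
      using isonormal_sum[of M N W n f c] assms(1,2) by blast
    from this assms(3) show ?thesis
      by eventually_elim simp
  qed
qed

definition vhat_kernel ::
    "'d \<Rightarrow> real \<Rightarrow> real \<Rightarrow> real^'k \<Rightarrow> (bool \<times> 'd) \<times> (real \<times> (real^'k)) \<Rightarrow> real" where
  "vhat_kernel j0 \<beta> t x = (\<lambda>((a, j), (\<tau>, \<xi>)). if j = j0 then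
     (if a then Re (Gker \<beta> t x \<tau> \<xi>) else - Im (Gker \<beta> t x \<tau> \<xi>)) else 0)"

lemma vhat_eq_W_vhat_kernel: "vhat W j0 \<beta> t x = W (vhat_kernel j0 \<beta> t x)"
  unfolding vhat_def vhat_kernel_def ..

lemma vhat_kernel_apply:
  "vhat_kernel j0 \<beta> t x ((a, j), q) =
     (if j = j0 then if a then Re (Gker \<beta> t x (fst q) (snd q)) else - Im (Gker \<beta> t x (fst q) (snd q)) else 0)"
  by (simp add: vhat_kernel_def split: prod.split)

lemma sqint_vhat_kernel:
  fixes x :: "real^'k" and j0 :: "'d::finite"
  assumes "t \<ge> 0" "0 < \<beta>" "\<beta> < 2" "\<beta> \<le> real CARD('k)"
  shows "sqint (count_space UNIV \<Otimes>\<^sub>M (lborel :: (real \<times> (real^'k)) measure)) (vhat_kernel j0 \<beta> t x)"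
proof -
  define N where "N = count_space (UNIV :: (bool \<times> 'd) set) \<Otimes>\<^sub>M (lborel :: (real \<times> (real^'k)) measure)"
  define G where "G q = Gker \<beta> t x (fst q) (snd q)" for q :: "real \<times> (real^'k)"
  have [measurable]: "G \<in> borel_measurable lborel"
    unfolding G_def using borel_measurable_Gker by (simp add: measurable_lborel1)
  have measurable [measurable]: "vhat_kernel j0 \<beta> t x \<in> borel_measurable N"
    unfolding N_def
  proof (rule measurable_pair_measure_countable1)
    fix a :: "bool \<times> 'd"
    show "(\<lambda>q. vhat_kernel j0 \<beta> t x (a, q)) \<in> borel_measurable lborel"
      by (cases a) (simp add: vhat_kernel_apply G_def[symmetric])
  qed simp
  have "(vhat_kernel j0 \<beta> t x y)\<^sup>2 \<le> (cmod (G (snd y)))\<^sup>2" for y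
    using abs_Re_le_cmod[of "G (snd y)"] abs_Im_le_cmod[of "G (snd y)"]
    by (cases y) (auto simp: vhat_kernel_apply G_def simp flip: abs_le_square_iff)
  then have "(\<integral>\<^sup>+y. ennreal (norm ((vhat_kernel j0 \<beta> t x y)\<^sup>2)) \<partial>N) \<le> (\<integral>\<^sup>+y. ennreal ((cmod (G (snd y)))\<^sup>2) \<partial>N)"
    by (intro nn_integral_mono ennreal_leI) simp
  also have "\<dots> = (\<Sum>a\<in>(UNIV :: (bool \<times> 'd) set). (\<integral>\<^sup>+q. ennreal ((cmod (G q))\<^sup>2) \<partial>lborel))"
    unfolding N_def
    by (simp add: lborel.nn_integral_fst[symmetric] nn_integral_count_space_finite mult.commute)
  also have "\<dots> < \<infinity>"
    using nn_integral_norm_Gker_sq_finite[OF assms, of x] by (simp add: G_def ennreal_mult_less_top of_nat_less_top)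
  finally have "integrable N (\<lambda>y. (vhat_kernel j0 \<beta> t x y)\<^sup>2)"
    by (intro integrableI_bounded) auto
  with measurable show ?thesis
    by (simp add: sqint_def N_def)
qed

lemma AE_Gker_sum_zero:
  fixes x :: "nat \<Rightarrow> real^'k" and j0 :: "'d::finite"
  assumes "AE y in count_space UNIV \<Otimes>\<^sub>M lborel. (\<Sum>j<m. c j * vhat_kernel j0 \<beta> (t j) (x j) y) = 0"
  shows "AE q in lborel. (\<Sum>j<m. complex_of_real (c j) * Gker \<beta> (t j) (x j) (fst q) (snd q)) = 0"
proof -
  have "pair_sigma_finite (count_space (UNIV :: (bool \<times> 'd) set)) (lborel :: (real \<times> (real^'k)) measure)"
    by (simp add: pair_sigma_finite_def lborel.sigma_finite_measure_axioms sigma_finite_measure_count_space_finite)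
  from pair_sigma_finite.AE_pair[OF this assms]
  have "AE q in lborel. (\<Sum>j<m. c j * vhat_kernel j0 \<beta> (t j) (x j) ((a, j0), q)) = 0" for a
    by (simp add: AE_count_space)
  from this[of True] this[of False] show ?thesis
    by eventually_elim (simp add: vhat_kernel_apply complex_eq_iff Re_sum Im_sum sum_negf)
qed

section \<open>Exponential sums\<close>

lemma derivative_zero_on_ray:
  fixes f :: "real \<Rightarrow> 'a::real_normed_vector"
  assumes "\<forall>s>Y. f s = 0" and "\<And>s. s > Y \<Longrightarrow> (f has_vector_derivative f' s) (at s)"
  shows "\<forall>s>Y. f' s = 0"
proof (intro allI impI)
  fix s assume s: "s > Y"
  have "(f has_vector_derivative 0) (at s)"
    by (rule has_vector_derivative_transform_within_open[OF has_vector_derivative_const, where S = "{Y<..}"])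
       (use s assms(1) in auto)
  with assms(2)[OF s] show "f' s = 0"
    by (rule vector_derivative_unique_at)
qed

lemma has_vector_derivative_cis_sum:
  fixes b :: "'a \<Rightarrow> complex" and freq :: "'a \<Rightarrow> real"
  shows "((\<lambda>s. \<Sum>j\<in>J. b j * cis (s * freq j)) has_vector_derivative
          (\<Sum>j\<in>J. b j * (\<i> * complex_of_real (freq j)) * cis (s * freq j))) (at s)"
proof -
  have cis_eq: "cis (s * freq j) = exp (\<i> * complex_of_real (freq j) * complex_of_real s)" for s j
    by (simp add: cis_conv_exp mult_ac)
  have "((\<lambda>z. \<Sum>j\<in>J. b j * exp (\<i> * complex_of_real (freq j) * z)) has_field_derivative
      (\<Sum>j\<in>J. b j * (\<i> * complex_of_real (freq j)) * exp (\<i> * complex_of_real (freq j) * z))) (at z)" for z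
    by (auto intro!: derivative_eq_intros sum.cong simp: mult_ac)
  from has_vector_derivative_real_field[OF this] show ?thesis
    unfolding cis_eq .
qed

lemma cis_sum_eq_sum_frequency_groups:
  fixes b :: "'a \<Rightarrow> complex" and freq :: "'a \<Rightarrow> real"
  assumes "finite J"
  shows "(\<Sum>j\<in>J. b j * cis (s * freq j)) = (\<Sum>\<mu>\<in>freq ` J. cis (s * \<mu>) * (\<Sum>j\<in>{j\<in>J. freq j = \<mu>}. b j))"
  by (subst sum.group[symmetric, OF assms finite_imageI[OF assms], of freq])
     (auto simp: sum_distrib_left mult_ac intro!: sum.cong)

text \<open>Multiply by \<open>cis (- s * \<nu>)\<close> and differentiate.\<close>

lemma cis_sum_zero_on_ray_remove_frequency:
  fixes b :: "'a \<Rightarrow> complex" and freq :: "'a \<Rightarrow> real"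
  assumes "finite J" and zero: "\<forall>s>Y. (\<Sum>j\<in>J. b j * cis (s * freq j)) = 0"
  shows "\<forall>s>Y. (\<Sum>j\<in>{j\<in>J. freq j \<noteq> \<nu>}.
           (b j * (\<i> * complex_of_real (freq j - \<nu>))) * cis (s * (freq j - \<nu>))) = 0"
proof -
  have "\<forall>s>Y. (\<Sum>j\<in>J. b j * cis (s * (freq j - \<nu>))) = 0"
  proof (intro allI impI)
    fix s assume "s > Y"
    have "(\<Sum>j\<in>J. b j * cis (s * (freq j - \<nu>))) = cis (- (s * \<nu>)) * (\<Sum>j\<in>J. b j * cis (s * freq j))"
      unfolding sum_distrib_left by (intro sum.cong refl) (simp add: cis_mult right_diff_distrib mult_ac)
    with zero \<open>s > Y\<close> show "(\<Sum>j\<in>J. b j * cis (s * (freq j - \<nu>))) = 0"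
      by simp
  qed
  from derivative_zero_on_ray[OF this has_vector_derivative_cis_sum]
  show ?thesis
    by (subst sum.mono_neutral_left[OF assms(1)]) auto
qed

lemma cis_sum_zero_on_ray_imp_group_sum_zero:
  fixes b :: "'a \<Rightarrow> complex" and freq :: "'a \<Rightarrow> real"
  assumes "finite J" and "\<forall>s>Y. (\<Sum>j\<in>J. b j * cis (s * freq j)) = 0"
  shows "(\<Sum>j\<in>{j\<in>J. freq j = \<mu>}. b j) = 0"
  using assms
proof (induction "card (freq ` J)" arbitrary: J freq b \<mu> rule: less_induct)
  case less
  note fin = less.prems(1) and zero = less.prems(2)
  show ?case
  proof (cases "J = {}")
    case False
    then obtain \<nu> where \<nu>: "\<nu> \<in> freq ` J"
      by blast
    define J' where "J' = {j\<in>J. freq j \<noteq> \<nu>}"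
    have "card ((\<lambda>j. freq j - \<nu>) ` J') = card (freq ` J - {\<nu>})"
      by (rule bij_betw_same_card[of "\<lambda>x. x + \<nu>"]) (auto simp: bij_betw_def inj_on_def J'_def image_iff)
    also have "\<dots> < card (freq ` J)"
      using fin \<nu> by (intro psubset_card_mono) auto
    finally have "card ((\<lambda>j. freq j - \<nu>) ` J') < card (freq ` J)" .
    from less.hyps[OF this _ cis_sum_zero_on_ray_remove_frequency[OF fin zero, of \<nu>, folded J'_def]]
    have IH: "(\<Sum>j\<in>{j\<in>J'. freq j - \<nu> = \<mu>'}. b j * (\<i> * complex_of_real (freq j - \<nu>))) = 0" for \<mu>'
      using fin by (simp add: J'_def)
    have other: "(\<Sum>j\<in>{j\<in>J. freq j = \<mu>'}. b j) = 0" if "\<mu>' \<noteq> \<nu>" for \<mu>'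
    proof -
      have "{j\<in>J'. freq j - \<nu> = \<mu>' - \<nu>} = {j\<in>J. freq j = \<mu>'}"
        using that by (auto simp: J'_def)
      moreover have "(\<Sum>j\<in>{j\<in>J. freq j = \<mu>'}. b j * (\<i> * complex_of_real (freq j - \<nu>)))
          = \<i> * complex_of_real (\<mu>' - \<nu>) * (\<Sum>j\<in>{j\<in>J. freq j = \<mu>'}. b j)"
        unfolding sum_distrib_left by (intro sum.cong refl) (simp add: mult_ac)
      ultimately show ?thesis
        using IH[of "\<mu>' - \<nu>"] that by simp
    qed
    show ?thesis
    proof (cases "\<mu> = \<nu>")
      case True
      have "0 = (\<Sum>\<mu>'\<in>freq ` J. cis ((Y + 1) * \<mu>') * (\<Sum>j\<in>{j\<in>J. freq j = \<mu>'}. b j))"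
        using zero cis_sum_eq_sum_frequency_groups[OF fin] by simp
      also have "\<dots> = cis ((Y + 1) * \<nu>) * (\<Sum>j\<in>{j\<in>J. freq j = \<nu>}. b j)"
        using fin \<nu> other by (subst sum.remove[of _ \<nu>]) (auto intro!: sum.neutral)
      finally show ?thesis
        using True by simp
    qed (use other in simp)
  qed simp
qed

lemma cis_sum_affine_zero_on_ray_imp_group_sum_zero:
  fixes b :: "'a \<Rightarrow> complex" and freq :: "'a \<Rightarrow> real"
  assumes "finite J" and "\<forall>j\<in>J. freq j \<noteq> 0"
    and "\<forall>s>Y. (\<Sum>j\<in>J. b j * cis (s * freq j)) + \<alpha> * complex_of_real s + \<gamma> = 0"
  shows "(\<Sum>j\<in>{j\<in>J. freq j = \<mu>}. b j) = 0"
proof -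
  define b' where "b' j = b j * (\<i> * complex_of_real (freq j))" for j
  define b'' where "b'' j = b' j * (\<i> * complex_of_real (freq j))" for j
  have "((\<lambda>s. \<alpha> * complex_of_real s) has_vector_derivative \<alpha>) (at s)" for s
    using has_vector_derivative_real_field[of "\<lambda>z. \<alpha> * z" \<alpha>] by (auto intro!: derivative_eq_intros)
  then have "((\<lambda>s. (\<Sum>j\<in>J. b j * cis (s * freq j)) + \<alpha> * complex_of_real s + \<gamma>) has_vector_derivative
      (\<Sum>j\<in>J. b' j * cis (s * freq j)) + \<alpha> + 0) (at s)" for s
    unfolding b'_def by (intro has_vector_derivative_add has_vector_derivative_cis_sum has_vector_derivative_const)
  from derivative_zero_on_ray[OF assms(3) this]
  have first: "\<forall>s>Y. (\<Sum>j\<in>J. b' j * cis (s * freq j)) + \<alpha> = 0"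
    by simp
  have "((\<lambda>s. (\<Sum>j\<in>J. b' j * cis (s * freq j)) + \<alpha>) has_vector_derivative
      (\<Sum>j\<in>J. b'' j * cis (s * freq j)) + 0) (at s)" for s
    unfolding b''_def by (intro has_vector_derivative_add has_vector_derivative_cis_sum has_vector_derivative_const)
  from derivative_zero_on_ray[OF first this]
  have "\<forall>s>Y. (\<Sum>j\<in>J. b'' j * cis (s * freq j)) = 0"
    by simp
  from cis_sum_zero_on_ray_imp_group_sum_zero[OF assms(1) this]
  have "(\<Sum>j\<in>{j\<in>J. freq j = \<mu>}. b'' j) = 0" .
  moreover have "(\<Sum>j\<in>{j\<in>J. freq j = \<mu>}. b'' j) = - complex_of_real (\<mu>\<^sup>2) * (\<Sum>j\<in>{j\<in>J. freq j = \<mu>}. b j)"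
    unfolding b''_def b'_def sum_distrib_left
    by (intro sum.cong refl) (simp add: power2_eq_square algebra_simps)
  moreover have "\<mu> \<noteq> 0" if "{j\<in>J. freq j = \<mu>} \<noteq> {}"
    using that assms(2) by auto
  ultimately show ?thesis
    by (cases "{j\<in>J. freq j = \<mu>} = {}") (simp_all only: sum.empty, auto)
qed

section \<open>Linear independence\<close>

lemma continuous_on_AE_zero_imp_zero:
  fixes H :: "'a::euclidean_space \<Rightarrow> 'b::real_normed_vector"
  assumes "open U" "continuous_on U H" and zero: "AE q in lborel. q \<in> U \<longrightarrow> H q = 0"
  shows "\<forall>q\<in>U. H q = 0"
proof (rule ccontr)
  assume "\<not> (\<forall>q\<in>U. H q = 0)"
  then have nonempty: "U \<inter> H -` (- {0}) \<noteq> {}"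
    by auto
  have "open (U \<inter> H -` (- {0}))"
    using assms(1,2) by (simp add: continuous_on_open_vimage open_Compl Int_commute)
  from zero obtain N where N: "{q \<in> space lborel. \<not> (q \<in> U \<longrightarrow> H q = 0)} \<subseteq> N"
    "emeasure lborel N = 0" "N \<in> sets lborel"
    by (rule AE_E)
  then have "negligible N"
    by (auto simp: negligible_iff_null_sets intro: null_sets_completionI)
  moreover have "U \<inter> H -` (- {0}) \<subseteq> N"
    using N(1) by auto
  ultimately have "negligible (U \<inter> H -` (- {0}))"
    by (rule negligible_subset)
  with open_not_negligible[OF \<open>open (U \<inter> H -` (- {0}))\<close> nonempty] show False
    by simp
qed

definition off_light_cone :: "(real \<times> (real^'k)) set" where
  "off_light_cone = {q. snd q \<noteq> 0 \<and> fst q \<noteq> norm (snd q) \<and> fst q \<noteq> - norm (snd q)}"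

lemma open_off_light_cone: "open off_light_cone"
proof -
  have "off_light_cone = {q. snd q \<noteq> 0} \<inter> {q. fst q \<noteq> norm (snd q)} \<inter> {q. fst q \<noteq> - norm (snd q)}"
    by (auto simp: off_light_cone_def)
  also have "open \<dots>"
    by (intro open_Int open_Collect_neq continuous_intros)
  finally show ?thesis .
qed

lemma continuous_on_Fker_off_light_cone:
  "continuous_on off_light_cone (\<lambda>q. Fker t x (fst q) (snd q))"
  unfolding Fker_def off_light_cone_def
  by (intro continuous_intros) (auto simp flip: of_real_add of_real_diff)

lemma Fker_sum_zero_off_light_cone:
  fixes x :: "nat \<Rightarrow> real^'k"
  assumes "AE q in lborel. (\<Sum>j<m. complex_of_real (c j) * Gker \<beta> (t j) (x j) (fst q) (snd q)) = 0"
  shows "\<forall>q\<in>off_light_cone. (\<Sum>j<m. complex_of_real (c j) * Fker (t j) (x j) (fst q) (snd q)) = 0"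
proof (rule continuous_on_AE_zero_imp_zero[OF open_off_light_cone])
  show "continuous_on off_light_cone (\<lambda>q. \<Sum>j<m. complex_of_real (c j) * Fker (t j) (x j) (fst q) (snd q))"
    by (intro continuous_intros continuous_on_Fker_off_light_cone)
  show "AE q in lborel. q \<in> off_light_cone \<longrightarrow>
      (\<Sum>j<m. complex_of_real (c j) * Fker (t j) (x j) (fst q) (snd q)) = 0"
    using assms
  proof eventually_elim
    case (elim q)
    have "(\<Sum>j<m. complex_of_real (c j) * Gker \<beta> (t j) (x j) (fst q) (snd q))
        = (\<Sum>j<m. complex_of_real (c j) * Fker (t j) (x j) (fst q) (snd q))
          * complex_of_real (norm (snd q) powr (- (real CARD('k) - \<beta>) / 2))"
      unfolding Gker_def sum_distrib_right by (simp add: mult_ac)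
    with elim show ?case
      by (auto simp: off_light_cone_def)
  qed
qed

lemma Fker_mult_eq_cis_affine:
  assumes "\<xi> \<noteq> 0"
  shows "\<exists>B C. \<forall>\<tau>. \<tau> + norm \<xi> \<noteq> 0 \<longrightarrow> \<tau> - norm \<xi> \<noteq> 0 \<longrightarrow>
    Fker t x \<tau> \<xi> * complex_of_real (2 * norm \<xi> * ((\<tau> + norm \<xi>) * (\<tau> - norm \<xi>)))
      = - complex_of_real (2 * norm \<xi>) * cis (- (\<xi> \<bullet> x)) * cis (\<tau> * - t) + B * complex_of_real \<tau> + C"
proof (intro exI allI impI)
  fix \<tau> assume "\<tau> + norm \<xi> \<noteq> 0" "\<tau> - norm \<xi> \<noteq> 0"
  define r where "r = norm \<xi>"
  define A where "A = cis (- (\<xi> \<bullet> x))"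
  define D where "D = cis_quot t (\<tau> + r) - cis_quot t (\<tau> - r)"
  have "complex_of_real (2 * r) \<noteq> 0"
    using assms by (simp add: r_def)
  moreover have "cis (- (\<xi> \<bullet> x) - \<tau> * t) = A * cis (- (t * \<tau>))"
    unfolding A_def cis_mult by (rule arg_cong[where f = cis]) simp
  ultimately have "Fker t x \<tau> \<xi> * complex_of_real (2 * r) = A * cis (- (t * \<tau>)) * D"
    unfolding Fker_eq_cis_quot r_def[symmetric] D_def by simp
  then have "Fker t x \<tau> \<xi> * complex_of_real (2 * r) * complex_of_real ((\<tau> + r) * (\<tau> - r))
      = A * cis (- (t * \<tau>)) * D * complex_of_real ((\<tau> + r) * (\<tau> - r))"
    by simp
  then have "Fker t x \<tau> \<xi> * complex_of_real (2 * r * ((\<tau> + r) * (\<tau> - r)))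
      = A * (cis (- (t * \<tau>)) * D * complex_of_real ((\<tau> + r) * (\<tau> - r)))"
    by (simp only: of_real_mult mult.assoc)
  also have "\<dots> = A * (- complex_of_real (2 * r) * cis (- (t * \<tau>)) - complex_of_real \<tau> * (cis (t * r) - cis (- (t * r)))
       + complex_of_real r * (cis (t * r) + cis (- (t * r))))"
    unfolding D_def r_def using cis_quot_diff_mult_eq \<open>\<tau> + norm \<xi> \<noteq> 0\<close> \<open>\<tau> - norm \<xi> \<noteq> 0\<close> by simp
  finally show "Fker t x \<tau> \<xi> * complex_of_real (2 * norm \<xi> * ((\<tau> + norm \<xi>) * (\<tau> - norm \<xi>)))
      = - complex_of_real (2 * norm \<xi>) * cis (- (\<xi> \<bullet> x)) * cis (\<tau> * - t)
        + (- cis (- (\<xi> \<bullet> x)) * (cis (t * norm \<xi>) - cis (- (t * norm \<xi>)))) * complex_of_real \<tau>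
        + cis (- (\<xi> \<bullet> x)) * complex_of_real (norm \<xi>) * (cis (t * norm \<xi>) + cis (- (t * norm \<xi>)))"
    unfolding r_def A_def by (simp add: algebra_simps)
qed

lemma Fker_sum_mult_eq_cis_affine:
  fixes x :: "'a \<Rightarrow> real^'k" and t :: "'a \<Rightarrow> real" and c :: "'a \<Rightarrow> complex"
  assumes "\<xi> \<noteq> 0"
  shows "\<exists>B C. \<forall>\<tau>. \<tau> + norm \<xi> \<noteq> 0 \<longrightarrow> \<tau> - norm \<xi> \<noteq> 0 \<longrightarrow>
    (\<Sum>j\<in>J. c j * Fker (t j) (x j) \<tau> \<xi>) * complex_of_real (2 * norm \<xi> * ((\<tau> + norm \<xi>) * (\<tau> - norm \<xi>)))
      = (\<Sum>j\<in>J. (c j * (- complex_of_real (2 * norm \<xi>) * cis (- (\<xi> \<bullet> x j)))) * cis (\<tau> * - t j))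
        + B * complex_of_real \<tau> + C"
proof -
  have "\<exists>B C. \<forall>\<tau>. \<tau> + norm \<xi> \<noteq> 0 \<longrightarrow> \<tau> - norm \<xi> \<noteq> 0 \<longrightarrow>
    Fker (t j) (x j) \<tau> \<xi> * complex_of_real (2 * norm \<xi> * ((\<tau> + norm \<xi>) * (\<tau> - norm \<xi>)))
      = - complex_of_real (2 * norm \<xi>) * cis (- (\<xi> \<bullet> x j)) * cis (\<tau> * - t j) + B * complex_of_real \<tau> + C" for j
    using Fker_mult_eq_cis_affine[OF assms] .
  then obtain B C where BC: "\<And>j \<tau>. \<tau> + norm \<xi> \<noteq> 0 \<Longrightarrow> \<tau> - norm \<xi> \<noteq> 0 \<Longrightarrow>
    Fker (t j) (x j) \<tau> \<xi> * complex_of_real (2 * norm \<xi> * ((\<tau> + norm \<xi>) * (\<tau> - norm \<xi>)))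
      = - complex_of_real (2 * norm \<xi>) * cis (- (\<xi> \<bullet> x j)) * cis (\<tau> * - t j) + B j * complex_of_real \<tau> + C j"
    by metis
  show ?thesis
  proof (rule exI[of _ "\<Sum>j\<in>J. c j * B j"], rule exI[of _ "\<Sum>j\<in>J. c j * C j"], intro allI impI)
    fix \<tau> assume \<tau>: "\<tau> + norm \<xi> \<noteq> 0" "\<tau> - norm \<xi> \<noteq> 0"
    let ?P = "complex_of_real (2 * norm \<xi> * ((\<tau> + norm \<xi>) * (\<tau> - norm \<xi>)))"
    have "(\<Sum>j\<in>J. c j * Fker (t j) (x j) \<tau> \<xi>) * ?P = (\<Sum>j\<in>J. c j * (Fker (t j) (x j) \<tau> \<xi> * ?P))"
      by (simp add: sum_distrib_right mult.assoc)
    also have "\<dots> = (\<Sum>j\<in>J. c j * (- complex_of_real (2 * norm \<xi>) * cis (- (\<xi> \<bullet> x j)) * cis (\<tau> * - t j)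
        + B j * complex_of_real \<tau> + C j))"
      unfolding BC[OF \<tau>] ..
    also have "\<dots> = (\<Sum>j\<in>J. (c j * (- complex_of_real (2 * norm \<xi>) * cis (- (\<xi> \<bullet> x j)))) * cis (\<tau> * - t j))
        + (\<Sum>j\<in>J. c j * B j) * complex_of_real \<tau> + (\<Sum>j\<in>J. c j * C j)"
      by (simp add: ring_distribs sum.distrib sum_subtractf sum_negf sum_distrib_right mult.assoc)
    finally show "(\<Sum>j\<in>J. c j * Fker (t j) (x j) \<tau> \<xi>) * ?P = (\<Sum>j\<in>J. (c j * (- complex_of_real (2 * norm \<xi>) * cis (- (\<xi> \<bullet> x j)))) * cis (\<tau> * - t j))
        + (\<Sum>j\<in>J. c j * B j) * complex_of_real \<tau> + (\<Sum>j\<in>J. c j * C j)" .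
  qed
qed

lemma Fker_sum_zero_imp_same_time_sum_zero:
  fixes x :: "nat \<Rightarrow> real^'k" and t c :: "nat \<Rightarrow> real"
  assumes t: "\<forall>j<m. t j > 0"
    and zero: "\<forall>q\<in>off_light_cone. (\<Sum>j<m. complex_of_real (c j) * Fker (t j) (x j) (fst q) (snd q)) = 0"
    and "\<xi> \<noteq> 0"
  shows "(\<Sum>j\<in>{j. j < m \<and> t j = T}. complex_of_real (c j) * cis (- (\<xi> \<bullet> x j))) = 0"
proof -
  define r where "r = norm \<xi>"
  define b where "b j = complex_of_real (c j) * (- complex_of_real (2 * r) * cis (- (\<xi> \<bullet> x j)))" for j
  from Fker_sum_mult_eq_cis_affine[OF \<open>\<xi> \<noteq> 0\<close>, where J = "{..<m}" and c = "\<lambda>j. complex_of_real (c j)"]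
  obtain B C where BC: "\<forall>\<tau>. \<tau> + r \<noteq> 0 \<longrightarrow> \<tau> - r \<noteq> 0 \<longrightarrow>
    (\<Sum>j<m. complex_of_real (c j) * Fker (t j) (x j) \<tau> \<xi>) * complex_of_real (2 * r * ((\<tau> + r) * (\<tau> - r)))
      = (\<Sum>j<m. b j * cis (\<tau> * - t j)) + B * complex_of_real \<tau> + C"
    unfolding r_def b_def by blast
  have "\<forall>\<tau>>r. (\<Sum>j\<in>{..<m}. b j * cis (\<tau> * - t j)) + B * complex_of_real \<tau> + C = 0"
  proof (intro allI impI)
    fix \<tau> assume "\<tau> > r"
    moreover have "0 \<le> r"
      by (simp add: r_def)
    ultimately have \<tau>: "\<tau> + r \<noteq> 0" "\<tau> - r \<noteq> 0"
      by linarith+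
    with \<open>\<xi> \<noteq> 0\<close> have "(\<tau>, \<xi>) \<in> off_light_cone"
      by (auto simp: off_light_cone_def r_def)
    from bspec[OF zero this] BC[rule_format, OF \<tau>]
    show "(\<Sum>j\<in>{..<m}. b j * cis (\<tau> * - t j)) + B * complex_of_real \<tau> + C = 0"
      by simp
  qed
  moreover have "\<forall>j\<in>{..<m}. - t j \<noteq> 0"
    using t by fastforce
  ultimately have "(\<Sum>j\<in>{j\<in>{..<m}. - t j = - T}. b j) = 0"
    by (intro cis_sum_affine_zero_on_ray_imp_group_sum_zero[where freq = "\<lambda>j. - t j"]) auto
  moreover have "(\<Sum>j\<in>{j\<in>{..<m}. - t j = - T}. b j)
      = - complex_of_real (2 * r) * (\<Sum>j\<in>{j. j < m \<and> t j = T}. complex_of_real (c j) * cis (- (\<xi> \<bullet> x j)))"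
    unfolding b_def sum_distrib_left by (intro sum.cong) (auto simp: mult_ac)
  ultimately show ?thesis
    using \<open>\<xi> \<noteq> 0\<close> by (simp add: r_def)
qed

text \<open>On a ray \<open>s *\<^sub>R v\<close> whose direction \<open>v\<close> separates the points \<open>x j\<close>, the sum becomes an
  exponential sum with the distinct frequencies \<open>- (v \<bullet> x j)\<close>.\<close>

lemma cis_inner_sum_zero_imp_coeff_zero:
  fixes x :: "'a \<Rightarrow> 'b::euclidean_space" and c :: "'a \<Rightarrow> complex"
  assumes "finite S" "inj_on x S" "j1 \<in> S"
    and zero: "\<And>\<xi>. \<xi> \<noteq> 0 \<Longrightarrow> (\<Sum>j\<in>S. c j * cis (- (\<xi> \<bullet> x j))) = 0"
  shows "c j1 = 0"
proof -
  define P where "P = {(i, j). i \<in> S \<and> j \<in> S \<and> i \<noteq> j}"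
  define Bad where "Bad = insert 0 (\<Union>(i, j)\<in>P. {v. (x i - x j) \<bullet> v = 0})"
  have "finite P"
    using assms(1) by (auto simp: P_def intro: finite_subset[of _ "S \<times> S"])
  moreover have "x i - x j \<noteq> 0" if "(i, j) \<in> P" for i j
    using that assms(2) by (auto simp: P_def inj_on_def)
  ultimately have "negligible Bad"
    unfolding Bad_def by (auto intro!: negligible_hyperplane)
  then have "Bad \<noteq> UNIV"
    by auto
  then obtain v where v: "v \<notin> Bad"
    by blast
  have separating: "v \<bullet> x j \<noteq> v \<bullet> x j1" if "j \<in> S" "j \<noteq> j1" for j
    using v that assms(3) by (auto simp: Bad_def P_def inner_diff_left inner_diff_right inner_commute)
  have "\<forall>s>0. (\<Sum>j\<in>S. c j * cis (s * - (v \<bullet> x j))) = 0"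
    using zero[of "s *\<^sub>R v" for s] v by (auto simp: Bad_def)
  from cis_sum_zero_on_ray_imp_group_sum_zero[OF assms(1) this, of "- (v \<bullet> x j1)"]
  have "(\<Sum>j\<in>{j\<in>S. - (v \<bullet> x j) = - (v \<bullet> x j1)}. c j) = 0" .
  moreover have "{j\<in>S. - (v \<bullet> x j) = - (v \<bullet> x j1)} = {j1}"
    using separating assms(3) by auto
  ultimately show ?thesis
    by simp
qed

theorem lemma5p9:
  fixes M :: "'w measure"
    and W :: "((bool \<times> 'd::finite) \<times> (real \<times> (real^'k)) \<Rightarrow> real) \<Rightarrow> 'w \<Rightarrow> real"
    and j0 :: 'd and \<beta> :: real and m :: nat and p :: "nat \<Rightarrow> real \<times> (real^'k)"
  assumes "isonormal M (count_space UNIV \<Otimes>\<^sub>M (lborel :: (real \<times> (real^'k)) measure)) W"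
    and "(CARD('k) = 1 \<and> \<beta> = 1) \<or> (1 < \<beta> \<and> \<beta> < min (real CARD('k)) 2)"
    and "inj_on p {..<m}"
    and "\<forall>j<m. fst (p j) > 0"
  shows "\<forall>c :: nat \<Rightarrow> real.
           (AE \<omega> in M. (\<Sum>j<m. c j * vhat W j0 \<beta> (fst (p j)) (snd (p j)) \<omega>) = 0)
           \<longrightarrow> (\<forall>j<m. c j = 0)"
proof (intro allI impI)
  fix c :: "nat \<Rightarrow> real" and j1
  assume vanish: "AE \<omega> in M. (\<Sum>j<m. c j * vhat W j0 \<beta> (fst (p j)) (snd (p j)) \<omega>) = 0"
    and "j1 < m"
  define t where "t j = fst (p j)" for j
  define x where "x j = snd (p j)" for j
  have t: "\<forall>j<m. t j > 0"
    using assms(4) by (simp add: t_def)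
  have "0 < \<beta>" "\<beta> < 2" "\<beta> \<le> real CARD('k)"
    using assms(2) by auto
  with t have "sqint (count_space UNIV \<Otimes>\<^sub>M lborel) (vhat_kernel j0 \<beta> (t j) (x j))" if "j < m" for j
    using that by (intro sqint_vhat_kernel) auto
  from isonormal_AE_sum_zero_imp_AE_sum_zero[OF assms(1) this] vanish
  have "AE y in count_space UNIV \<Otimes>\<^sub>M lborel. (\<Sum>j<m. c j * vhat_kernel j0 \<beta> (t j) (x j) y) = 0"
    by (simp add: t_def x_def vhat_eq_W_vhat_kernel)
  from Fker_sum_zero_off_light_cone[OF AE_Gker_sum_zero[OF this]]
  have same_time: "(\<Sum>j\<in>{j. j < m \<and> t j = T}. complex_of_real (c j) * cis (- (\<xi> \<bullet> x j))) = 0"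
    if "\<xi> \<noteq> 0" for \<xi> T
    by (rule Fker_sum_zero_imp_same_time_sum_zero[OF t _ that])
  have "inj_on x {j. j < m \<and> t j = t j1}"
    using assms(3) by (auto simp: inj_on_def t_def x_def prod_eq_iff)
  from cis_inner_sum_zero_imp_coeff_zero[OF _ this _ same_time] \<open>j1 < m\<close>
  show "c j1 = 0"
    by simp
qed

end
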